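(* Let $(X,d)$ be a complete metric space and $T:X\to X$ a map. For $x,y\in X$ define $$P(x,y)=\max\{d(x,Tx)+d(Tx,y),\ d(T^2x,y)+d(T^2x,Ty),\ d(Tx,T^2x)+d(Tx,y),\ d(Tx,y)+d(Tx,Ty),\ d(x,y),\ d(x,Ty),\ d(y,Ty)\},$$ $$Q(x,y)=\max\{d(x,Tx)+d(Tx,T^2x),\ d(x,Tx)+d(Tx,y),\ d(T^2x,Ty)+d(y,Ty),\ d(Tx,T^2x)+d(T^2x,Ty),\ d(x,y),\ d(x,Ty)\}.$$ Suppose there is $\gamma\in[0,1/2)$ such that $d(Tx,Ty)\le\gamma\max\{P(x,y),Q(x,y)\}$ for all $x,y\in X$. Then $T$ is globally strong Picard modulo $d$: for every $x\in X$ the sequence $(T^nx)_{n\ge0}$ converges in $(X,d)$, its limit is a fixed point of $T$, and $T$ has at most one (hence exactly one) fixed point. *)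

theory Defs
  imports "HOL-Analysis.Analysis"
begin

definition P_fun :: "('a::metric_space \<Rightarrow> 'a) \<Rightarrow> 'a \<Rightarrow> 'a \<Rightarrow> real" where
  "P_fun T x y = Max {dist x (T x) + dist (T x) y,
                      dist (T (T x)) y + dist (T (T x)) (T y),
                      dist (T x) (T (T x)) + dist (T x) y,
                      dist (T x) y + dist (T x) (T y),
                      dist x y, dist x (T y), dist y (T y)}"

definition Q_fun :: "('a::metric_space \<Rightarrow> 'a) \<Rightarrow> 'a \<Rightarrow> 'a \<Rightarrow> real" where
  "Q_fun T x y = Max {dist x (T x) + dist (T x) (T (T x)),
                      dist x (T x) + dist (T x) y,
                      dist (T (T x)) (T y) + dist y (T y),
                      dist (T x) (T (T x)) + dist (T (T x)) (T y),
                      dist x y, dist x (T y)}"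

end

theory Submission
  imports Defs
begin

text \<open>On an orbit, with \<open>y = T x\<close>, every entry of \<open>P\<close> and \<open>Q\<close> is at most
  \<open>d(x,Tx) + d(Tx,T\<^sup>2x)\<close>, so the contractive condition gives
  \<open>d(Tx,T\<^sup>2x) \<le> \<gamma>/(1-\<gamma>) \<cdot> d(x,Tx)\<close> with \<open>\<gamma>/(1-\<gamma>) < 1\<close>; hence the orbit is Cauchy and converges.
  If \<open>z\<close> is its limit, applying the condition to \<open>(T\<^sup>nx, z)\<close> and letting \<open>n \<rightarrow> \<infinity>\<close> yields
  \<open>d(z,Tz) \<le> 2\<gamma> d(z,Tz)\<close>; for two fixed points \<open>u, v\<close> it yields \<open>d(u,v) \<le> 2\<gamma> d(u,v)\<close>.
  Since \<open>2\<gamma> < 1\<close>, both distances vanish.\<close>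

lemma dist_le_sum_dist_Suc:
  fixes s :: "nat \<Rightarrow> 'a::metric_space"
  assumes "m \<le> n"
  shows "dist (s m) (s n) \<le> (\<Sum>i\<in>{m..<n}. dist (s i) (s (Suc i)))"
  using assms
proof (induction n rule: dec_induct)
  case base
  then show ?case by simp
next
  case (step n)
  have "dist (s m) (s (Suc n)) \<le> dist (s m) (s n) + dist (s n) (s (Suc n))"
    by (rule dist_triangle)
  with step show ?case by simp
qed

lemma Cauchy_if_summable_dist_Suc:
  fixes s :: "nat \<Rightarrow> 'a::metric_space"
  assumes "summable (\<lambda>i. dist (s i) (s (Suc i)))"
  shows "Cauchy s"
proof (rule metric_CauchyI)
  fix e :: real
  assume "e > 0"
  with assms obtain N where "\<forall>m\<ge>N. \<forall>n. norm (\<Sum>i\<in>{m..<n}. dist (s i) (s (Suc i))) < e"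
    unfolding summable_Cauchy by blast
  then have N: "(\<Sum>i\<in>{m..<n}. dist (s i) (s (Suc i))) < e" if "m \<ge> N" for m n
    using that abs_ge_self order_le_less_trans unfolding real_norm_def by blast
  have "dist (s m) (s n) < e" if "m \<ge> N" "n \<ge> N" for m n
  proof (cases "m \<le> n")
    case True
    then show ?thesis using dist_le_sum_dist_Suc[of m n s] N[of m n] \<open>m \<ge> N\<close> by linarith
  next
    case False
    then show ?thesis
      using dist_le_sum_dist_Suc[of n m s] N[of n m] \<open>n \<ge> N\<close> by (simp add: dist_commute)
  qed
  then show "\<exists>M. \<forall>m\<ge>M. \<forall>n\<ge>M. dist (s m) (s n) < e" by blast
qed

lemma Cauchy_if_dist_Suc_le_geometric:
  fixes s :: "nat \<Rightarrow> 'a::metric_space"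
  assumes "0 \<le> k" "k < 1" and "\<And>n. dist (s n) (s (Suc n)) \<le> C * k ^ n"
  shows "Cauchy s"
proof (rule Cauchy_if_summable_dist_Suc)
  have "summable (\<lambda>n. C * k ^ n)"
    using assms(1,2) by (intro summable_mult summable_geometric) simp
  then show "summable (\<lambda>n. dist (s n) (s (Suc n)))"
    by (rule summable_comparison_test[rotated]) (simp add: assms(3))
qed

lemma max_P_Q_orbit_le:
  fixes T :: "'a::metric_space \<Rightarrow> 'a"
  shows "max (P_fun T x (T x)) (Q_fun T x (T x)) \<le> dist x (T x) + dist (T x) (T (T x))"
  using dist_triangle[of x "T (T x)" "T x"] by (simp add: P_fun_def Q_fun_def dist_commute)

lemma max_P_Q_le_dists_to:
  fixes T :: "'a::metric_space \<Rightarrow> 'a"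
  shows "max (P_fun T x y) (Q_fun T x y)
    \<le> 2 * dist y (T y) + 2 * (dist x y + dist (T x) y + dist (T (T x)) y)"
  using dist_triangle[of x "T x" y] dist_triangle[of "T (T x)" "T y" y]
    dist_triangle[of "T x" "T (T x)" y] dist_triangle[of "T x" "T y" y]
    dist_triangle[of x "T y" y]
  by (simp add: P_fun_def Q_fun_def dist_commute) (smt (verit) zero_le_dist)

lemma max_P_Q_fixed_points:
  fixes T :: "'a::metric_space \<Rightarrow> 'a"
  assumes "T u = u" "T v = v"
  shows "max (P_fun T u v) (Q_fun T u v) = 2 * dist u v"
  using assms by (simp add: P_fun_def Q_fun_def)

locale PQ_contraction =
  fixes T :: "'a::metric_space \<Rightarrow> 'a" and \<gamma> :: real
  assumes nonneg: "0 \<le> \<gamma>" and less_half: "\<gamma> < 1/2"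
    and contractive: "\<And>x y. dist (T x) (T y) \<le> \<gamma> * max (P_fun T x y) (Q_fun T x y)"
begin

lemma le_gamma_double_imp_eq_0:
  assumes "d \<le> \<gamma> * (2 * d)" "0 \<le> d"
  shows "d = 0"
proof -
  have "(1 - 2 * \<gamma>) * d \<le> 0" using assms(1) by (simp add: algebra_simps)
  then show ?thesis using assms(2) less_half by (simp add: mult_le_0_iff)
qed

lemma dist_T_step_le:
  "dist (T x) (T (T x)) \<le> \<gamma> / (1 - \<gamma>) * dist x (T x)"
proof -
  have "dist (T x) (T (T x)) \<le> \<gamma> * (dist x (T x) + dist (T x) (T (T x)))"
    using contractive[of x "T x"] max_P_Q_orbit_le[of T x] nonneg
    by (meson mult_left_mono order_trans)
  then have "(1 - \<gamma>) * dist (T x) (T (T x)) \<le> \<gamma> * dist x (T x)"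
    by (simp add: algebra_simps)
  then show ?thesis using less_half by (simp add: field_simps)
qed

lemma dist_iterate_Suc_le:
  "dist ((T ^^ n) x) ((T ^^ Suc n) x) \<le> dist x (T x) * (\<gamma> / (1 - \<gamma>)) ^ n"
proof (induction n)
  case 0
  then show ?case by simp
next
  case (Suc n)
  have "dist ((T ^^ Suc n) x) ((T ^^ Suc (Suc n)) x)
      \<le> \<gamma> / (1 - \<gamma>) * dist ((T ^^ n) x) ((T ^^ Suc n) x)"
    using dist_T_step_le[of "(T ^^ n) x"] by simp
  also have "\<dots> \<le> \<gamma> / (1 - \<gamma>) * (dist x (T x) * (\<gamma> / (1 - \<gamma>)) ^ n)"
    using Suc nonneg less_half by (intro mult_left_mono) auto
  finally show ?case by (simp add: algebra_simps)
qed

lemma Cauchy_orbit: "Cauchy (\<lambda>n. (T ^^ n) x)"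
  using nonneg less_half dist_iterate_Suc_le
  by (intro Cauchy_if_dist_Suc_le_geometric[where k = "\<gamma> / (1 - \<gamma>)"]) auto

lemma orbit_limit_is_fixed_point:
  assumes lim: "(\<lambda>n. (T ^^ n) x) \<longlonglongrightarrow> z"
  shows "T z = z"
proof -
  define e where "e = dist z (T z)"
  define a where "a n = dist ((T ^^ n) x) z" for n
  define b where "b n = a (Suc n) + \<gamma> * (2 * e + 2 * (a n + a (Suc n) + a (Suc (Suc n))))" for n
  have a: "a \<longlonglongrightarrow> 0"
    using lim unfolding a_def by (simp flip: tendsto_dist_iff)
  then have "b \<longlonglongrightarrow> 0 + \<gamma> * (2 * e + 2 * (0 + 0 + 0))"
    unfolding b_def by (intro tendsto_intros a LIMSEQ_Suc)
  then have b: "b \<longlonglongrightarrow> \<gamma> * (2 * e)" by simp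
  have "e \<le> b n" for n
  proof -
    have "e \<le> dist z ((T ^^ Suc n) x) + dist (T ((T ^^ n) x)) (T z)"
      unfolding e_def using dist_triangle by simp
    also have "dist (T ((T ^^ n) x)) (T z)
        \<le> \<gamma> * (2 * e + 2 * (a n + a (Suc n) + a (Suc (Suc n))))"
      using contractive[of "(T ^^ n) x" z] max_P_Q_le_dists_to[of T "(T ^^ n) x" z] nonneg
      unfolding a_def e_def by (simp add: mult_left_mono order_trans)
    finally show ?thesis by (simp add: b_def a_def dist_commute)
  qed
  then have "e \<le> \<gamma> * (2 * e)" using LIMSEQ_le_const[OF b] by blast
  then have "e = 0" by (rule le_gamma_double_imp_eq_0) (simp add: e_def)
  then show ?thesis by (simp add: e_def)
qed

lemma fixed_point_unique:
  assumes "T u = u" "T v = v"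
  shows "u = v"
  using contractive[of u v] le_gamma_double_imp_eq_0[of "dist u v"]
  by (simp add: max_P_Q_fixed_points assms)

end

theorem theorem4:
  fixes T :: "'a::complete_space \<Rightarrow> 'a" and \<gamma> :: real
  assumes "0 \<le> \<gamma>" and "\<gamma> < 1/2"
    and "\<And>x y. dist (T x) (T y) \<le> \<gamma> * max (P_fun T x y) (Q_fun T x y)"
  shows "(\<forall>x. \<exists>z. (\<lambda>n. (T ^^ n) x) \<longlonglongrightarrow> z \<and> T z = z)
         \<and> (\<forall>u v. T u = u \<and> T v = v \<longrightarrow> u = v)"
proof -
  interpret PQ_contraction T \<gamma>
    using assms by unfold_locales
  have "\<exists>z. (\<lambda>n. (T ^^ n) x) \<longlonglongrightarrow> z \<and> T z = z" for x
    using Cauchy_orbit[of x] orbit_limit_is_fixed_point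
    by (auto simp: Cauchy_convergent_iff convergent_def)
  then show ?thesis using fixed_point_unique by blast
qed

end
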